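(* Fix the model parameters $\tau_{DA},L_P,L_U,p_P^i,p_U^i,c_P,c_I,\xi_{\rm cov},ded,Cov_{\max},D_{\max}$ and a population size vector $\mathbf m$ as in the context, and suppose Assumption (A) holds. (i) Let $K_1,K_2\in\mathbb N$ with $K_1\le K_2$ and $\beta_{IA}\in(0,1]$. If $\mathbf x^1$ is any Nash equilibrium of the population game with parameters $(K_1,\beta_{IA})$ and $\mathbf x^2$ is any Nash equilibrium of the population game with parameters $(K_2,\beta_{IA})$, then $\sum_{d\in\mathcal D}x^1_{d,P}\le\sum_{d\in\mathcal D}x^2_{d,P}$. (ii) Let $K\in\mathbb N$ and $0<\beta^1_{IA}\le\beta^2_{IA}\le 1$. If $\mathbf x^1$ is any Nash equilibrium of the game with parameters $(K,\beta^1_{IA})$ and $\mathbf x^2$ is any Nash equilibrium of the game with parameters $(K,\beta^2_{IA})$, then $\sum_{d\in\mathcal D}x^1_{d,P}\le\sum_{d\in\mathcal D}x^2_{d,P}$.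
   Context: Population game model. Let $D_{\max}\in\mathbb N$, $\mathcal D=\{1,\dots,D_{\max}\}$ (population $d$ = nodes of degree $d$), and action set $\mathcal A=\{I,N,P\}$ (insurance, no action, protection). A population size vector is $\mathbf m=(m_d)_{d\in\mathcal D}$ with $m_d>0$ and $\sum_d m_d=1$. A social state is $\mathbf x=(x_{d,a})_{d\in\mathcal D,a\in\mathcal A}$ with $x_{d,a}\ge0$ and $\sum_{a}x_{d,a}=m_d$; $\mathcal X$ is the set of social states. Parameters: $\tau_{DA}\in(0,1]$; $0\le L_P<L_U$, $\Delta L=L_U-L_P$; $0\le p_P^i<p_U^i\le1$, $\Delta p=p_U^i-p_P^i$; $\beta_{IA}\in(0,1]$; $K\in\mathbb N$; costs $c_P,c_I\ge0$; $\xi_{\rm cov}\in(0,1]$, $ded\ge0$, $Cov_{\max}\ge0$. Define $w_d=d\,m_d/\sum_{d'}d'm_{d'}$, $d_{\rm avg}=\sum_d d\,m_d$, $g_{d,a}=x_{d,a}/m_d$, $g_{d,U}=g_{d,N}+g_{d,I}$, and $\gamma(\mathbf x)=\beta_{IA}\sum_{d}w_d(g_{d,P}p_P^i+g_{d,U}p_U^i)$, $\lambda(\mathbf x)=\beta_{IA}\sum_d w_d(d-1)(g_{d,P}p_P^i+g_{d,U}p_U^i)$, and the exposure $e(\mathbf x)=\gamma(\mathbf x)\sum_{k=1}^K\lambda(\mathbf x)^{k-1}$. Costs: $C_{d,P}(\mathbf x)=\tau_{DA}(1+d\,e(\mathbf x))L_P+c_P$, $C_{d,N}(\mathbf x)=\tau_{DA}(1+d\,e(\mathbf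 x))L_U$, $C_{d,I}(\mathbf x)=C_{d,N}(\mathbf x)+c_I-Ins(\mathbf x,d)$ where $Ins(\mathbf x,d)=\min\big(Cov_{\max},\ \xi_{\rm cov}\max(0,C_{d,N}(\mathbf x)-ded)\big)$. A social state $\mathbf x^\star$ is a Nash equilibrium if for all $d\in\mathcal D$, $a\in\mathcal A$: $x^\star_{d,a}>0$ implies $C_{d,a}(\mathbf x^\star)=\min_{a'\in\mathcal A}C_{d,a'}(\mathbf x^\star)$. Assumption (A): $L_P<(1-\xi_{\rm cov})L_U$ and $c_P>c_I+ded$. *)

theory Defs
  imports Complex_Main
begin

datatype action = aI | aN | aP

text \<open>Model parameters other than K and beta_IA (which vary in the theorem).\<close>
record model =
  Dmax :: nat
  tauDA :: real
  LP :: real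
  LU :: real
  pP :: real
  pU :: real
  cP :: real
  cI :: real
  xicov :: real
  ded :: real
  Covmax :: real

definition degrees :: "model \<Rightarrow> nat set" where
  "degrees M = {1..Dmax M}"

definition valid_model :: "model \<Rightarrow> bool" where
  "valid_model M \<longleftrightarrow> Dmax M \<ge> 1 \<and> 0 < tauDA M \<and> tauDA M \<le> 1
     \<and> 0 \<le> LP M \<and> LP M < LU M \<and> 0 \<le> pP M \<and> pP M < pU M \<and> pU M \<le> 1
     \<and> cP M \<ge> 0 \<and> cI M \<ge> 0 \<and> 0 < xicov M \<and> xicov M \<le> 1
     \<and> ded M \<ge> 0 \<and> Covmax M \<ge> 0"

definition assumption_A :: "model \<Rightarrow> bool" where
  "assumption_A M \<longleftrightarrow> LP M < (1 - xicov M) * LU M \<and> cP M > cI M + ded M"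

definition pop_vector :: "model \<Rightarrow> (nat \<Rightarrow> real) \<Rightarrow> bool" where
  "pop_vector M m \<longleftrightarrow> (\<forall>d\<in>degrees M. m d > 0) \<and> (\<Sum>d\<in>degrees M. m d) = 1"

definition social_state :: "model \<Rightarrow> (nat \<Rightarrow> real) \<Rightarrow> (nat \<Rightarrow> action \<Rightarrow> real) \<Rightarrow> bool" where
  "social_state M m x \<longleftrightarrow>
     (\<forall>d\<in>degrees M. (\<forall>a. x d a \<ge> 0) \<and> x d aI + x d aN + x d aP = m d)"

definition wdeg :: "model \<Rightarrow> (nat \<Rightarrow> real) \<Rightarrow> nat \<Rightarrow> real" where
  "wdeg M m d = real d * m d / (\<Sum>d'\<in>degrees M. real d' * m d')"

definition gfrac :: "(nat \<Rightarrow> real) \<Rightarrow> (nat \<Rightarrow> action \<Rightarrow> real) \<Rightarrow> nat \<Rightarrow> action \<Rightarrow> real" where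
  "gfrac m x d a = x d a / m d"

definition infprob :: "model \<Rightarrow> (nat \<Rightarrow> real) \<Rightarrow> (nat \<Rightarrow> action \<Rightarrow> real) \<Rightarrow> nat \<Rightarrow> real" where
  "infprob M m x d = gfrac m x d aP * pP M + (gfrac m x d aN + gfrac m x d aI) * pU M"

definition gammaE :: "model \<Rightarrow> real \<Rightarrow> (nat \<Rightarrow> real) \<Rightarrow> (nat \<Rightarrow> action \<Rightarrow> real) \<Rightarrow> real" where
  "gammaE M beta m x = beta * (\<Sum>d\<in>degrees M. wdeg M m d * infprob M m x d)"

definition lambdaE :: "model \<Rightarrow> real \<Rightarrow> (nat \<Rightarrow> real) \<Rightarrow> (nat \<Rightarrow> action \<Rightarrow> real) \<Rightarrow> real" where
  "lambdaE M beta m x = beta * (\<Sum>d\<in>degrees M. wdeg M m d * (real d - 1) * infprob M m x d)"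

definition exposure :: "model \<Rightarrow> nat \<Rightarrow> real \<Rightarrow> (nat \<Rightarrow> real) \<Rightarrow> (nat \<Rightarrow> action \<Rightarrow> real) \<Rightarrow> real" where
  "exposure M K beta m x = gammaE M beta m x * (\<Sum>k\<in>{1..K}. lambdaE M beta m x ^ (k - 1))"

definition costN :: "model \<Rightarrow> nat \<Rightarrow> real \<Rightarrow> (nat \<Rightarrow> real) \<Rightarrow> (nat \<Rightarrow> action \<Rightarrow> real) \<Rightarrow> nat \<Rightarrow> real" where
  "costN M K beta m x d = tauDA M * (1 + real d * exposure M K beta m x) * LU M"

definition insurance :: "model \<Rightarrow> nat \<Rightarrow> real \<Rightarrow> (nat \<Rightarrow> real) \<Rightarrow> (nat \<Rightarrow> action \<Rightarrow> real) \<Rightarrow> nat \<Rightarrow> real" where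
  "insurance M K beta m x d = min (Covmax M) (xicov M * max 0 (costN M K beta m x d - ded M))"

definition cost :: "model \<Rightarrow> nat \<Rightarrow> real \<Rightarrow> (nat \<Rightarrow> real) \<Rightarrow> (nat \<Rightarrow> action \<Rightarrow> real) \<Rightarrow> nat \<Rightarrow> action \<Rightarrow> real" where
  "cost M K beta m x d a = (case a of
      aP \<Rightarrow> tauDA M * (1 + real d * exposure M K beta m x) * LP M + cP M
    | aN \<Rightarrow> costN M K beta m x d
    | aI \<Rightarrow> costN M K beta m x d + cI M - insurance M K beta m x d)"

definition nash_eq :: "model \<Rightarrow> nat \<Rightarrow> real \<Rightarrow> (nat \<Rightarrow> real) \<Rightarrow> (nat \<Rightarrow> action \<Rightarrow> real) \<Rightarrow> bool" where
  "nash_eq M K beta m x \<longleftrightarrow> social_state M m x \<and>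
     (\<forall>d\<in>degrees M. \<forall>a. x d a > 0 \<longrightarrow>
        cost M K beta m x d a = Min (range (cost M K beta m x d)))"

end

theory Submission
  imports Defs
begin

text \<open>A node's costs depend on the social state only through s = d e(x). By the first half of (A),
  L_P < (1 - xi_cov) L_U, the costs of N and of I exceed that of P by
  an amount strictly increasing in s: once protection is weakly optimal at some s, it is strictly
  optimal at every larger s. Hence if degree d protects in one equilibrium and degree d' only partly
  protects in another, then d' e' \<le> d e.

  Suppose the first equilibrium protected more in total, say strictly more at degree d1. Then
  e2 \<le> e1. A degree protecting more in the second equilibrium would give e1 = e2, and comparing it
  with d1 inside each equilibrium would force e1 = 0, i.e. full protection everywhere. So the first
  equilibrium protects at least as much at every degree and strictly more at d1; its infection
  probabilities are then smaller and, as K1 \<le> K2 and beta1 \<le> beta2, its exposure strictly smaller: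
  a contradiction.\<close>

definition cost_at :: "model \<Rightarrow> real \<Rightarrow> action \<Rightarrow> real" where
  "cost_at M s a = (case a of
      aP \<Rightarrow> tauDA M * (1 + s) * LP M + cP M
    | aN \<Rightarrow> tauDA M * (1 + s) * LU M
    | aI \<Rightarrow> tauDA M * (1 + s) * LU M + cI M
            - min (Covmax M) (xicov M * max 0 (tauDA M * (1 + s) * LU M - ded M)))"

lemma cost_eq_cost_at: "cost M K b m x d = cost_at M (real d * exposure M K b m x)"
  by (rule ext) (simp add: cost_def costN_def insurance_def cost_at_def split: action.split)

subsection \<open>Single crossing of the protection cost\<close>

lemma min_max_increment_le:
  fixes y y' :: real
  assumes "y \<le> y'" "0 \<le> \<xi>"
  shows "min C (\<xi> * max 0 (y' - \<delta>)) - min C (\<xi> * max 0 (y - \<delta>)) \<le> \<xi> * (y' - y)"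
proof -
  have "max 0 (y' - \<delta>) - max 0 (y - \<delta>) \<le> y' - y" "max 0 (y - \<delta>) \<le> max 0 (y' - \<delta>)"
    using assms(1) by auto
  then have "\<xi> * max 0 (y' - \<delta>) - \<xi> * max 0 (y - \<delta>) \<le> \<xi> * (y' - y)"
    "\<xi> * max 0 (y - \<delta>) \<le> \<xi> * max 0 (y' - \<delta>)"
    using assms(2) by (simp_all add: right_diff_distrib[symmetric] mult_left_mono)
  then show ?thesis by linarith
qed

lemma cost_at_gap_strict_mono:
  assumes v: "valid_model M" and A: "assumption_A M" and a: "a \<noteq> aP" and s: "s < s'"
  shows "cost_at M s a - cost_at M s aP < cost_at M s' a - cost_at M s' aP"
proof -
  define t where "t = tauDA M * (s' - s)"
  define cN where "cN \<sigma> = tauDA M * (1 + \<sigma>) * LU M" for \<sigma>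
  define ins where "ins \<sigma> = min (Covmax M) (xicov M * max 0 (cN \<sigma> - ded M))" for \<sigma>
  have t: "0 < t" using v s by (simp add: t_def valid_model_def)
  have LU: "0 \<le> LU M" and xi: "0 \<le> xicov M" and LP: "LP M < LU M"
    and LPA: "LP M < (1 - xicov M) * LU M"
    using v A by (auto simp: valid_model_def assumption_A_def)
  have costs: "cost_at M \<sigma> aN = cN \<sigma>" "cost_at M \<sigma> aI = cN \<sigma> + cI M - ins \<sigma>" for \<sigma>
    by (simp_all add: cost_at_def cN_def ins_def)
  have dP: "cost_at M s' aP - cost_at M s aP = t * LP M"
    by (simp add: cost_at_def t_def algebra_simps)
  have dN: "cN s' - cN s = t * LU M"
    by (simp add: cN_def t_def algebra_simps)
  have "cN s \<le> cN s'" using dN mult_nonneg_nonneg[of t "LU M"] t LU by linarith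
  from min_max_increment_le[OF this xi]
  have "ins s' - ins s \<le> xicov M * (t * LU M)" unfolding ins_def dN .
  moreover have "t * ((1 - xicov M) * LU M) = t * LU M - xicov M * (t * LU M)"
    by (simp add: algebra_simps)
  ultimately have dI: "t * ((1 - xicov M) * LU M) \<le> cost_at M s' aI - cost_at M s aI"
    using dN unfolding costs by linarith
  have "t * LP M < t * LU M" "t * LP M < t * ((1 - xicov M) * LU M)"
    using t LP LPA by simp_all
  then show ?thesis
    using a dP dN dI costs(1)[of s] costs(1)[of s'] by (cases a) simp_all
qed

lemma protection_strictly_optimal_beyond:
  assumes "valid_model M" "assumption_A M"
    and weak: "\<forall>a. cost_at M s aP \<le> cost_at M s a" and "s < s'" and "a \<noteq> aP"
  shows "cost_at M s' aP < cost_at M s' a"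
  using cost_at_gap_strict_mono[OF assms(1,2,5,4)] weak[rule_format, of a] by linarith

lemma finite_UNIV_action: "finite (UNIV :: action set)"
proof -
  have "UNIV = {aI, aN, aP}" using action.exhaust by auto
  then show ?thesis by (metis finite.emptyI finite_insert)
qed

lemma nash_eq_used_action_optimal:
  assumes "nash_eq M K b m x" "d \<in> degrees M" "0 < x d a"
  shows "cost M K b m x d a \<le> cost M K b m x d a'"
proof -
  have "cost M K b m x d a = Min (range (cost M K b m x d))"
    using assms unfolding nash_eq_def by auto
  also have "\<dots> \<le> cost M K b m x d a'"
    by (rule Min_le) (simp_all add: finite_UNIV_action)
  finally show ?thesis .
qed

lemma social_state_protection_bounds:
  assumes "social_state M m x" "d \<in> degrees M"
  shows "0 \<le> x d aP" "x d aP \<le> m d"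
proof -
  have "x d aI + x d aN + x d aP = m d" "0 \<le> x d aI" "0 \<le> x d aN" "0 \<le> x d aP"
    using assms unfolding social_state_def by auto
  then show "0 \<le> x d aP" "x d aP \<le> m d" by linarith+
qed

lemma nash_eq_protection_crossing:
  assumes v: "valid_model M" and A: "assumption_A M"
    and n: "nash_eq M K b m x" and n': "nash_eq M K' b' m x'"
    and d: "d \<in> degrees M" and d': "d' \<in> degrees M"
    and protects: "0 < x d aP" and partial: "x' d' aP < m d'"
  shows "real d' * exposure M K' b' m x' \<le> real d * exposure M K b m x"
proof (rule ccontr)
  assume "\<not> ?thesis"
  then have less: "real d * exposure M K b m x < real d' * exposure M K' b' m x'" by simp
  have "x' d' aI + x' d' aN + x' d' aP = m d'" "0 \<le> x' d' aI" "0 \<le> x' d' aN"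
    using n' d' unfolding nash_eq_def social_state_def by auto
  then have "0 < x' d' aN \<or> 0 < x' d' aI" using partial by linarith
  then obtain a where a: "a \<noteq> aP" "0 < x' d' a"
    using action.distinct by blast
  have "\<forall>a. cost_at M (real d * exposure M K b m x) aP \<le> cost_at M (real d * exposure M K b m x) a"
    using nash_eq_used_action_optimal[OF n d protects] by (simp add: cost_eq_cost_at)
  from protection_strictly_optimal_beyond[OF v A this less a(1)]
  show False using nash_eq_used_action_optimal[OF n' d' a(2), of aP] by (simp add: cost_eq_cost_at)
qed

subsection \<open>Monotonicity of the exposure\<close>

lemma degrees_ge_1: "d \<in> degrees M \<Longrightarrow> 1 \<le> real d"
  by (simp add: degrees_def)

lemma wdeg_pos:
  assumes "valid_model M" "pop_vector M m" "d \<in> degrees M"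
  shows "0 < wdeg M m d"
proof -
  have m: "0 < m d'" if "d' \<in> degrees M" for d'
    using assms(2) that by (simp add: pop_vector_def)
  have "degrees M \<noteq> {}" using assms(1) by (auto simp: degrees_def valid_model_def)
  then have "0 < (\<Sum>d'\<in>degrees M. real d' * m d')"
    using m degrees_ge_1 by (intro sum_pos) (auto simp: degrees_def)
  then show ?thesis
    using m[OF assms(3)] degrees_ge_1[OF assms(3)] by (simp add: wdeg_def)
qed

lemma infprob_eq:
  assumes "social_state M m x" "d \<in> degrees M" "0 < m d"
  shows "infprob M m x d = pU M - x d aP / m d * (pU M - pP M)"
proof -
  have "x d aN + x d aI = m d - x d aP" using assms(1,2) unfolding social_state_def by force
  then have shares: "gfrac m x d aN + gfrac m x d aI = 1 - gfrac m x d aP"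
    using assms(3) by (simp add: gfrac_def add_divide_distrib[symmetric] diff_divide_distrib)
  have "infprob M m x d = gfrac m x d aP * pP M + (1 - gfrac m x d aP) * pU M"
    unfolding infprob_def shares ..
  also have "\<dots> = pU M - gfrac m x d aP * (pU M - pP M)"
    by (simp add: algebra_simps)
  finally show ?thesis by (simp add: gfrac_def)
qed

lemma infprob_le_iff:
  assumes "valid_model M" "social_state M m x" "social_state M m x'" "d \<in> degrees M" "0 < m d"
  shows "infprob M m x d \<le> infprob M m x' d \<longleftrightarrow> x' d aP \<le> x d aP"
proof -
  have "0 < pU M - pP M" using assms(1) by (simp add: valid_model_def)
  then show ?thesis
    using infprob_eq[OF assms(2,4,5)] infprob_eq[OF assms(3,4,5)] assms(5)
    by (simp add: divide_le_cancel)
qed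

lemma infprob_less_iff:
  assumes "valid_model M" "social_state M m x" "social_state M m x'" "d \<in> degrees M" "0 < m d"
  shows "infprob M m x d < infprob M m x' d \<longleftrightarrow> x' d aP < x d aP"
  using infprob_le_iff[OF assms(1,3,2,4,5)] by linarith

lemma infprob_nonneg:
  assumes "valid_model M" "social_state M m x" "d \<in> degrees M" "0 < m d"
  shows "0 \<le> infprob M m x d"
proof -
  have "x d aP / m d \<le> 1" "0 \<le> pU M - pP M" "0 \<le> pP M"
    using social_state_protection_bounds[OF assms(2,3)] assms(1,4)
    by (auto simp: valid_model_def)
  then have "x d aP / m d * (pU M - pP M) \<le> pU M - pP M"
    using mult_right_mono[of "x d aP / m d" 1 "pU M - pP M"] by simp
  then show ?thesis using infprob_eq[OF assms(2-4)] \<open>0 \<le> pP M\<close> by linarith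
qed

lemma lambdaE_nonneg:
  assumes "valid_model M" "pop_vector M m" "social_state M m x" "0 \<le> b"
  shows "0 \<le> lambdaE M b m x"
proof -
  have "0 \<le> wdeg M m d * (real d - 1) * infprob M m x d" if d: "d \<in> degrees M" for d
    using wdeg_pos[OF assms(1,2) d] degrees_ge_1[OF d]
      infprob_nonneg[OF assms(1,3) d] assms(2) d by (simp add: pop_vector_def)
  then show ?thesis unfolding lambdaE_def using assms(4) by (simp add: sum_nonneg)
qed

lemma gammaE_nonneg:
  assumes "valid_model M" "pop_vector M m" "social_state M m x" "0 \<le> b"
  shows "0 \<le> gammaE M b m x"
proof -
  have "0 \<le> wdeg M m d * infprob M m x d" if d: "d \<in> degrees M" for d
    using wdeg_pos[OF assms(1,2) d] infprob_nonneg[OF assms(1,3) d] assms(2) d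
    by (simp add: pop_vector_def)
  then show ?thesis unfolding gammaE_def using assms(4) by (simp add: sum_nonneg)
qed

lemma gammaE_strict_mono:
  assumes v: "valid_model M" and pv: "pop_vector M m" and s1: "social_state M m x1"
    and b: "0 < b1" "b1 \<le> b2"
    and le: "\<And>d. d \<in> degrees M \<Longrightarrow> infprob M m x1 d \<le> infprob M m x2 d"
    and d1: "d1 \<in> degrees M" and less: "infprob M m x1 d1 < infprob M m x2 d1"
  shows "gammaE M b1 m x1 < gammaE M b2 m x2"
proof -
  define S where "S x = (\<Sum>d\<in>degrees M. wdeg M m d * infprob M m x d)" for x
  note w = wdeg_pos[OF v pv]
  have "S x1 < S x2" unfolding S_def
  proof (rule sum_strict_mono_ex1)
    show "finite (degrees M)" by (simp add: degrees_def)
    show "\<forall>d\<in>degrees M. wdeg M m d * infprob M m x1 d \<le> wdeg M m d * infprob M m x2 d"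
      using le w by (simp add: less_imp_le mult_left_mono)
    show "\<exists>d\<in>degrees M. wdeg M m d * infprob M m x1 d < wdeg M m d * infprob M m x2 d"
      using less w[OF d1] by (intro bexI[OF _ d1]) simp
  qed
  moreover have "0 \<le> S x1" using gammaE_nonneg[OF v pv s1, of 1] by (simp add: gammaE_def S_def)
  ultimately show ?thesis
    unfolding gammaE_def S_def[symmetric] using b by (simp add: mult_le_less_imp_less)
qed

lemma lambdaE_mono:
  assumes v: "valid_model M" and pv: "pop_vector M m" and s1: "social_state M m x1"
    and b: "0 \<le> b1" "b1 \<le> b2"
    and le: "\<And>d. d \<in> degrees M \<Longrightarrow> infprob M m x1 d \<le> infprob M m x2 d"
  shows "lambdaE M b1 m x1 \<le> lambdaE M b2 m x2"
proof -
  have "(\<Sum>d\<in>degrees M. wdeg M m d * (real d - 1) * infprob M m x1 d)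
      \<le> (\<Sum>d\<in>degrees M. wdeg M m d * (real d - 1) * infprob M m x2 d)"
    using le wdeg_pos[OF v pv] degrees_ge_1
    by (intro sum_mono mult_left_mono) (simp_all add: less_imp_le)
  then show ?thesis
    unfolding lambdaE_def using b lambdaE_nonneg[OF v pv s1, of 1]
    by (intro mult_mono) (simp_all add: lambdaE_def)
qed

lemma sum_powers_ge_1:
  fixes l :: real
  assumes "1 \<le> K" "0 \<le> l"
  shows "1 \<le> (\<Sum>k\<in>{1..K}. l ^ (k - 1))"
  using member_le_sum[of 1 "{1..K}" "\<lambda>k. l ^ (k - 1)"] assms by simp

lemma sum_powers_mono:
  fixes l l' :: real
  assumes "0 \<le> l" "l \<le> l'" "K \<le> K'"
  shows "(\<Sum>k\<in>{1..K}. l ^ (k - 1)) \<le> (\<Sum>k\<in>{1..K'}. l' ^ (k - 1))"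
proof -
  have "(\<Sum>k\<in>{1..K}. l ^ (k - 1)) \<le> (\<Sum>k\<in>{1..K}. l' ^ (k - 1))"
    using assms by (intro sum_mono power_mono)
  also have "\<dots> \<le> (\<Sum>k\<in>{1..K'}. l' ^ (k - 1))"
    using assms by (intro sum_mono2) auto
  finally show ?thesis .
qed

lemma exposure_strict_mono:
  assumes v: "valid_model M" and pv: "pop_vector M m"
    and s1: "social_state M m x1" and s2: "social_state M m x2"
    and K: "1 \<le> K1" "K1 \<le> K2" and b: "0 < b1" "b1 \<le> b2"
    and le: "\<forall>d\<in>degrees M. x2 d aP \<le> x1 d aP"
    and d1: "d1 \<in> degrees M" "x2 d1 aP < x1 d1 aP"
  shows "exposure M K1 b1 m x1 < exposure M K2 b2 m x2"
proof -
  have m: "0 < m d" if "d \<in> degrees M" for d using pv that by (simp add: pop_vector_def)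
  have ip_le: "infprob M m x1 d \<le> infprob M m x2 d" if d: "d \<in> degrees M" for d
    using infprob_le_iff[OF v s1 s2 d m[OF d]] le d by simp
  have "infprob M m x1 d1 < infprob M m x2 d1"
    using infprob_less_iff[OF v s1 s2 d1(1) m[OF d1(1)]] d1(2) by simp
  from gammaE_strict_mono[OF v pv s1 b ip_le d1(1) this]
  have gamma: "gammaE M b1 m x1 < gammaE M b2 m x2" .
  have "lambdaE M b1 m x1 \<le> lambdaE M b2 m x2"
    using lambdaE_mono[OF v pv s1 _ b(2) ip_le] b(1) by simp
  then have G: "(\<Sum>k\<in>{1..K1}. lambdaE M b1 m x1 ^ (k - 1))
      \<le> (\<Sum>k\<in>{1..K2}. lambdaE M b2 m x2 ^ (k - 1))"
    using lambdaE_nonneg[OF v pv s1] b K by (intro sum_powers_mono) simp_all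
  have "1 \<le> (\<Sum>k\<in>{1..K1}. lambdaE M b1 m x1 ^ (k - 1))"
    using lambdaE_nonneg[OF v pv s1] b K by (intro sum_powers_ge_1) simp_all
  then show ?thesis
    unfolding exposure_def
    using mult_less_le_imp_less[OF gamma G gammaE_nonneg[OF v pv s1]] b by simp
qed

lemma exposure_eq_0_imp_full_protection:
  assumes v: "valid_model M" and pv: "pop_vector M m" and s: "social_state M m x"
    and K: "1 \<le> K" and b: "0 < b" and e: "exposure M K b m x = 0" and d: "d \<in> degrees M"
  shows "x d aP = m d"
proof -
  have m: "0 < m d'" if "d' \<in> degrees M" for d' using pv that by (simp add: pop_vector_def)
  have terms: "0 \<le> wdeg M m d' * infprob M m x d'" if "d' \<in> degrees M" for d'
    using wdeg_pos[OF v pv that] infprob_nonneg[OF v s that m[OF that]] by simp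
  have "1 \<le> (\<Sum>k\<in>{1..K}. lambdaE M b m x ^ (k - 1))"
    using lambdaE_nonneg[OF v pv s] b K by (intro sum_powers_ge_1) auto
  then have "gammaE M b m x = 0" using e by (simp add: exposure_def)
  then have "(\<Sum>d'\<in>degrees M. wdeg M m d' * infprob M m x d') = 0"
    using b by (simp add: gammaE_def)
  then have "wdeg M m d * infprob M m x d = 0"
    using sum_nonneg_eq_0_iff[of "degrees M" "\<lambda>d'. wdeg M m d' * infprob M m x d'"] terms d
    by (simp add: degrees_def)
  then have g: "x d aP / m d * (pU M - pP M) = pU M"
    using wdeg_pos[OF v pv d] infprob_eq[OF s d m[OF d]] by simp
  have "x d aP / m d \<le> 1" "0 \<le> pP M" "pP M < pU M"
    using social_state_protection_bounds[OF s d] m[OF d] v by (auto simp: valid_model_def)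
  then have "x d aP / m d * (pU M - pP M) \<le> pU M - pP M"
    using mult_right_mono[of "x d aP / m d" 1 "pU M - pP M"] by simp
  with g \<open>0 \<le> pP M\<close> have "pP M = 0" by linarith
  with g have "x d aP / m d * pU M = 1 * pU M" by (simp only: diff_zero mult_1_left)
  then have "x d aP / m d = 1"
    using mult_right_cancel[of "pU M" "x d aP / m d" 1] \<open>pP M = 0\<close> \<open>pP M < pU M\<close> by simp
  then show ?thesis using m[OF d] by simp
qed

lemma nash_eq_total_protection_mono:
  assumes v: "valid_model M" and pv: "pop_vector M m" and A: "assumption_A M"
    and K: "1 \<le> K1" "K1 \<le> K2" and b: "0 < b1" "b1 \<le> b2"
    and n1: "nash_eq M K1 b1 m x1" and n2: "nash_eq M K2 b2 m x2"
  shows "(\<Sum>d\<in>degrees M. x1 d aP) \<le> (\<Sum>d\<in>degrees M. x2 d aP)"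
proof (rule ccontr)
  assume "\<not> ?thesis"
  then obtain d1 where d1: "d1 \<in> degrees M" "x2 d1 aP < x1 d1 aP"
    using sum_mono[of "degrees M" "\<lambda>d. x1 d aP" "\<lambda>d. x2 d aP"] by force
  have s1: "social_state M m x1" and s2: "social_state M m x2"
    using n1 n2 by (simp_all add: nash_eq_def)
  define E1 where "E1 = exposure M K1 b1 m x1"
  define E2 where "E2 = exposure M K2 b2 m x2"
  note cross = nash_eq_protection_crossing[OF v A]
  note bounds1 = social_state_protection_bounds[OF s1]
    and bounds2 = social_state_protection_bounds[OF s2]
  have d1_prot: "0 < x1 d1 aP" "x2 d1 aP < m d1"
    using d1 bounds1[OF d1(1)] bounds2[OF d1(1)] by linarith+
  have "E2 \<le> E1"
    using cross[OF n1 n2 d1(1) d1(1) d1_prot] degrees_ge_1[OF d1(1)]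
    unfolding E1_def E2_def by simp
  have "x2 d aP \<le> x1 d aP" if d: "d \<in> degrees M" for d
  proof (rule ccontr)
    assume more: "\<not> x2 d aP \<le> x1 d aP"
    then have d_prot: "0 < x2 d aP" "x1 d aP < m d" using bounds1[OF d] bounds2[OF d] by linarith+
    have "E1 \<le> E2"
      using cross[OF n2 n1 d d d_prot] degrees_ge_1[OF d] unfolding E1_def E2_def by simp
    with \<open>E2 \<le> E1\<close> have "E1 = E2" by simp
    moreover have "real d * E1 \<le> real d1 * E1" "real d1 * E2 \<le> real d * E2"
      using cross[OF n1 n1 d1(1) d d1_prot(1) d_prot(2)] cross[OF n2 n2 d d1(1) d_prot(1) d1_prot(2)]
      unfolding E1_def E2_def by simp_all
    moreover have "d \<noteq> d1" using more d1 by auto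
    ultimately have "E1 = 0" by simp
    then show False
      using exposure_eq_0_imp_full_protection[OF v pv s1 K(1) b(1) _ d] d_prot(2)
      by (simp add: E1_def)
  qed
  then have "E1 < E2"
    unfolding E1_def E2_def using exposure_strict_mono[OF v pv s1 s2 K b _ d1] by blast
  with \<open>E2 \<le> E1\<close> show False by simp
qed

theorem theorem3:
  fixes M :: model and m :: "nat \<Rightarrow> real"
  assumes "valid_model M" and "pop_vector M m" and "assumption_A M"
  shows "(\<forall>K1 K2 beta x1 x2. 1 \<le> K1 \<longrightarrow> K1 \<le> K2 \<longrightarrow> 0 < beta \<longrightarrow> beta \<le> 1 \<longrightarrow>
            nash_eq M K1 beta m x1 \<longrightarrow> nash_eq M K2 beta m x2 \<longrightarrow>
            (\<Sum>d\<in>degrees M. x1 d aP) \<le> (\<Sum>d\<in>degrees M. x2 d aP))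
       \<and> (\<forall>K beta1 beta2 x1 x2. 1 \<le> K \<longrightarrow> 0 < beta1 \<longrightarrow> beta1 \<le> beta2 \<longrightarrow> beta2 \<le> 1 \<longrightarrow>
            nash_eq M K beta1 m x1 \<longrightarrow> nash_eq M K beta2 m x2 \<longrightarrow>
            (\<Sum>d\<in>degrees M. x1 d aP) \<le> (\<Sum>d\<in>degrees M. x2 d aP))"
  using nash_eq_total_protection_mono[OF assms] by (meson order_refl)

end
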